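(* Fix parameters $\mathfrak h=(h,\varepsilon,\theta)$. Let $w_h,v_h\in\mathbb V_h$ satisfy $$-\Delta^\diamond_{\infty,\mathfrak h}w_h(z)\le-\Delta^\diamond_{\infty,\mathfrak h}v_h(z)\qquad\forall z\in\mathcal N_h^I,\qquad(\ast)$$ and suppose that one of the following holds: (1) for every $z\in\mathcal N_h^I$, $(\ast)$ holds with strict inequality at $z$ or $-\Delta^\diamond_{\infty,\mathfrak h}w_h(z)<0$; (2) for every $z\in\mathcal N_h^I$, $(\ast)$ holds with strict inequality at $z$ or $-\Delta^\diamond_{\infty,\mathfrak h}v_h(z)>0$. Then $$\max_{z\in\mathcal N_h}\big[w_h(z)-v_h(z)\big]=\max_{z\in\mathcal N_h^b}\big[w_h(z)-v_h(z)\big].$$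
   Context: Setting: $\Omega\subset\mathbb R^d$ ($d\ge1$) is a bounded domain with continuous boundary. For $r>0$, $\Omega^{(r)}=\{x\in\Omega:\operatorname{dist}(x,\partial\Omega)>r\}$. $\mathcal T_h$ is a mesh of closed simplices, $h=\max_T\operatorname{diam}T$, $\Omega_h$ the interior of the union of the simplices, with $\Omega^{(h)}\subset\Omega_h\subset\Omega$; $\mathcal N_h$ is the set of vertices. $\mathbb V_h$ is the space of continuous piecewise linear functions on $\mathcal T_h$ and $\mathcal I_h$ is the Lagrange interpolant. Parameters $\mathfrak h=(h,\varepsilon,\theta)$ with $\varepsilon\in[h,\operatorname{diam}\Omega]$, $0<\theta\le1$. Interior nodes $\mathcal N_h^I=\mathcal N_h\cap\Omega^{(2\varepsilon)}$; boundary nodes $\mathcal N_h^b=\mathcal N_h\setminus\mathcal N_h^I$. $\mathbb S_\theta$ is a finite symmetric subset of the unit sphere $\mathbb S$ such that each $v\in\mathbb S$ has $v_\theta\in\mathbb S_\theta$ with $|v-v_\theta|\le\theta$. For $z\in\mathcal N_h^I$, $\mathcal N_{\mathfrak h}(z)=\{z\}\cup\{z+\varepsilon v_\theta:v_\theta\in\mathbb S_\theta\}$, $S^+_{\mathfrak h}w(z)=\varepsilon^{-1}(\max_{x\in\mathcal N_{\mathfrak h}(z)}w(x)-w(z))$, $S^-_{\mathfrak h}w(z)=\varepsilon^{-1}(w(z)-\min_{x\in\mathcal N_{\mathfrak h}(z)}w(x))$, and $-\Delta^\diamond_{\infty,\mathfrak h}w(z)=-\varepsilon^{-1}(S^+_{\mathfrak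 h}\mathcal I_hw(z)-S^-_{\mathfrak h}\mathcal I_hw(z))$ for $w\in C(\overline\Omega)$. *)

theory Defs
  imports "HOL-Analysis.Analysis"
begin

definition continuous_boundary :: "'a::euclidean_space set \<Rightarrow> bool" where
  "continuous_boundary \<Omega> \<longleftrightarrow>
     (\<forall>x\<in>frontier \<Omega>. \<exists>r>0. \<exists>e. norm e = 1 \<and>
        (\<exists>g. continuous_on {y. y \<bullet> e = 0} g \<and>
             ball x r \<inter> \<Omega> = {y\<in>ball x r. y \<bullet> e > g (y - (y \<bullet> e) *\<^sub>R e)}))"

definition domain_cb :: "'a::euclidean_space set \<Rightarrow> bool" where
  "domain_cb \<Omega> \<longleftrightarrow> open \<Omega> \<and> connected \<Omega> \<and> \<Omega> \<noteq> {} \<and> bounded \<Omega> \<and> continuous_boundary \<Omega>"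

definition inner_set :: "'a::euclidean_space set \<Rightarrow> real \<Rightarrow> 'a set" where
  "inner_set \<Omega> r = {x\<in>\<Omega>. infdist x (frontier \<Omega>) > r}"

text \<open>A mesh: a finite nonempty family of (closed) d-simplices, each given by its set of
d+1 affinely independent vertices; conforming (two simplices meet in a common face).\<close>
definition mesh :: "'a::euclidean_space set set \<Rightarrow> bool" where
  "mesh T \<longleftrightarrow> finite T \<and> T \<noteq> {} \<and>
     (\<forall>S\<in>T. finite S \<and> card S = DIM('a) + 1 \<and> \<not> affine_dependent S) \<and>
     (\<forall>S1\<in>T. \<forall>S2\<in>T. convex hull S1 \<inter> convex hull S2 = convex hull (S1 \<inter> S2))"

definition mesh_size :: "'a::euclidean_space set set \<Rightarrow> real" where
  "mesh_size T = Max ((\<lambda>S. diameter (convex hull S)) ` T)"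

definition mesh_nodes :: "'a::euclidean_space set set \<Rightarrow> 'a set" where
  "mesh_nodes T = \<Union>T"

definition mesh_union :: "'a::euclidean_space set set \<Rightarrow> 'a set" where
  "mesh_union T = (\<Union>S\<in>T. convex hull S)"

definition mesh_domain :: "'a::euclidean_space set set \<Rightarrow> 'a set" where
  "mesh_domain T = interior (mesh_union T)"

definition lagrange_interp :: "'a::euclidean_space set set \<Rightarrow> ('a \<Rightarrow> real) \<Rightarrow> 'a \<Rightarrow> real" where
  "lagrange_interp T w x =
     (THE y. \<exists>S\<in>T. \<exists>l. (\<forall>v\<in>S. 0 \<le> l v) \<and> sum l S = 1 \<and> (\<Sum>v\<in>S. l v *\<^sub>R v) = x
                      \<and> y = (\<Sum>v\<in>S. l v * w v))"

text \<open>V_h: continuous piecewise linear functions on the mesh (they coincide with their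
Lagrange interpolant on the meshed region).\<close>
definition Vh :: "'a::euclidean_space set set \<Rightarrow> ('a \<Rightarrow> real) set" where
  "Vh T = {w. \<forall>x\<in>mesh_union T. w x = lagrange_interp T w x}"

definition interior_nodes :: "'a::euclidean_space set \<Rightarrow> 'a set set \<Rightarrow> real \<Rightarrow> 'a set" where
  "interior_nodes \<Omega> T \<epsilon> = mesh_nodes T \<inter> inner_set \<Omega> (2 * \<epsilon>)"

definition boundary_nodes :: "'a::euclidean_space set \<Rightarrow> 'a set set \<Rightarrow> real \<Rightarrow> 'a set" where
  "boundary_nodes \<Omega> T \<epsilon> = mesh_nodes T - interior_nodes \<Omega> T \<epsilon>"

definition direction_set :: "real \<Rightarrow> 'a::euclidean_space set \<Rightarrow> bool" where
  "direction_set \<theta> S \<longleftrightarrow> finite S \<and> S \<subseteq> sphere 0 1 \<and> (\<forall>v\<in>S. - v \<in> S) \<and>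
     (\<forall>v\<in>sphere 0 1. \<exists>u\<in>S. norm (v - u) \<le> \<theta>)"

definition stencil :: "real \<Rightarrow> 'a::euclidean_space set \<Rightarrow> 'a \<Rightarrow> 'a set" where
  "stencil \<epsilon> S z = insert z ((\<lambda>v. z + \<epsilon> *\<^sub>R v) ` S)"

definition S_plus :: "'a::euclidean_space set set \<Rightarrow> real \<Rightarrow> 'a set \<Rightarrow> ('a \<Rightarrow> real) \<Rightarrow> 'a \<Rightarrow> real" where
  "S_plus T \<epsilon> S w z = (Max (w ` stencil \<epsilon> S z) - w z) / \<epsilon>"

definition S_minus :: "'a::euclidean_space set set \<Rightarrow> real \<Rightarrow> 'a set \<Rightarrow> ('a \<Rightarrow> real) \<Rightarrow> 'a \<Rightarrow> real" where
  "S_minus T \<epsilon> S w z = (w z - Min (w ` stencil \<epsilon> S z)) / \<epsilon>"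

definition neg_inf_lap :: "'a::euclidean_space set set \<Rightarrow> real \<Rightarrow> 'a set \<Rightarrow> ('a \<Rightarrow> real) \<Rightarrow> 'a \<Rightarrow> real" where
  "neg_inf_lap T \<epsilon> S w z =
     - (S_plus T \<epsilon> S (lagrange_interp T w) z - S_minus T \<epsilon> S (lagrange_interp T w) z) / \<epsilon>"

end

theory Submission
  imports Defs
begin

(*
  Pick a node z at which w - v is maximal and, among all such nodes, w is maximal. Every stencil
  point of an interior node lies in the meshed region, where the interpolants are convex
  combinations of nodal values with common weights; so the pair (w, v) at a stencil point lies in
  the convex hull of the nodal pairs. All nodal pairs lie in the convex set of points that are
  lexicographically below (w - v, w) at z, hence so do the stencil values. Consequently the
  one-sided increments of w at z are dominated by those of v, which gives
  -Delta w(z) >= -Delta v(z); if equality holds, a stencil point maximising w has the same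
  value of w - v as z but a larger value of w as soon as -Delta w(z) < 0. So under hypothesis
  (1) the node z cannot be interior. Hypothesis (2) is hypothesis (1) for the pair (-v, -w).
*)

section \<open>A maximum principle for max-min stencils\<close>

(* On the stencil of z this is \<epsilon>\<^sup>2 times the scheme's -\<Delta>\<^sub>\<infinity> of U at z, see neg_inf_lap_eq. *)
definition maxmin_defect :: "'a set \<Rightarrow> ('a \<Rightarrow> real) \<Rightarrow> 'a \<Rightarrow> real" where
  "maxmin_defect P U z = 2 * U z - Max (U ` P) - Min (U ` P)"

lemma maxmin_defect_uminus:
  assumes "finite P" "P \<noteq> {}"
  shows "maxmin_defect P (\<lambda>x. - U x) z = - maxmin_defect P U z"
proof -
  have "Min (U ` P) \<in> U ` P" "Max (U ` P) \<in> U ` P"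
    using assms by simp_all
  then have mem: "- Min (U ` P) \<in> (\<lambda>x. - U x) ` P" "- Max (U ` P) \<in> (\<lambda>x. - U x) ` P"
    by force+
  have "Max ((\<lambda>x. - U x) ` P) = - Min (U ` P)" "Min ((\<lambda>x. - U x) ` P) = - Max (U ` P)"
    using assms(1) by (auto intro!: Max_eqI Min_eqI intro: mem)
  then show ?thesis unfolding maxmin_defect_def by simp
qed

lemma max_min_increments_le:
  fixes W V :: "'a \<Rightarrow> real"
  assumes P: "finite P" "z \<in> P" and touch: "\<And>x. x \<in> P \<Longrightarrow> W x - W z \<le> V x - V z"
  shows "Max (W ` P) - W z \<le> Max (V ` P) - V z" "V z - Min (V ` P) \<le> W z - Min (W ` P)"
proof -
  have "P \<noteq> {}"
    using P(2) by blast
  then have "Max (W ` P) \<in> W ` P" "Min (V ` P) \<in> V ` P"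
    using P(1) by simp_all
  then obtain xw xv where xw: "xw \<in> P" "W xw = Max (W ` P)" and xv: "xv \<in> P" "V xv = Min (V ` P)"
    by auto
  have "V xw \<le> Max (V ` P)" "Min (W ` P) \<le> W xv"
    using P xw(1) xv(1) by simp_all
  then show "Max (W ` P) - W z \<le> Max (V ` P) - V z" "V z - Min (V ` P) \<le> W z - Min (W ` P)"
    using touch[OF xw(1)] touch[OF xv(1)] xw(2) xv(2) by linarith+
qed

lemma finite_lex_argmax:
  fixes f g :: "'a \<Rightarrow> real"
  assumes "finite N" "N \<noteq> {}"
  obtains z where "z \<in> N" "\<And>y. y \<in> N \<Longrightarrow> f y < f z \<or> (f y = f z \<and> g y \<le> g z)"
proof -
  define A where "A = {y \<in> N. f y = Max (f ` N)}"
  have "Max (f ` N) \<in> f ` N"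
    using assms by simp
  then have A: "finite A" "A \<noteq> {}"
    using assms(1) unfolding A_def by auto
  then have "Max (g ` A) \<in> g ` A"
    by simp
  then obtain z where z: "z \<in> A" "g z = Max (g ` A)"
    by auto
  have "f y < f z \<or> (f y = f z \<and> g y \<le> g z)" if "y \<in> N" for y
    using that z A(1) assms(1) unfolding A_def by (cases "y \<in> A") (auto simp: A_def less_le)
  then show thesis using that z(1) unfolding A_def by blast
qed

lemma Max_image_subset_eq:
  fixes f :: "'a \<Rightarrow> 'b::linorder"
  assumes "finite A" "B \<subseteq> A" "y \<in> B" "\<And>x. x \<in> A \<Longrightarrow> f x \<le> f y"
  shows "Max (f ` A) = Max (f ` B)"
proof -
  have "finite B"
    using assms(1,2) by (rule finite_subset[rotated])
  then have "Max (f ` A) = f y" "Max (f ` B) = f y"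
    using assms by (auto intro!: Max_eqI)
  then show ?thesis
    by simp
qed

definition lex_below :: "real \<Rightarrow> real \<Rightarrow> (real \<times> real) set" where
  "lex_below M c = {p. fst p - snd p < M \<or> (fst p - snd p = M \<and> fst p \<le> c)}"

lemma convex_lex_below: "convex (lex_below M c)"
proof (rule convexI)
  fix p q :: "real \<times> real" and u v :: real
  assume p: "p \<in> lex_below M c" and q: "q \<in> lex_below M c" and uv: "0 \<le> u" "0 \<le> v" "u + v = 1"
  have weighted: "t * (fst s - snd s) \<le> t * M" "t * (fst s - snd s) = t * M \<Longrightarrow> t * fst s \<le> t * c"
    if "0 \<le> t" "s \<in> lex_below M c" for t and s :: "real \<times> real"
    using that unfolding lex_below_def by (cases "t = 0"; auto intro: mult_left_mono)+
  have split: "u * a + v * a = a" for a :: real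
    using uv(3) by (simp flip: distrib_right)
  define r where "r = u *\<^sub>R p + v *\<^sub>R q"
  have diff_r: "fst r - snd r = u * (fst p - snd p) + v * (fst q - snd q)"
    and fst_r: "fst r = u * fst p + v * fst q"
    unfolding r_def by (simp_all add: algebra_simps)
  have "fst r - snd r \<le> M"
    using weighted(1)[OF uv(1) p] weighted(1)[OF uv(2) q] split[of M] diff_r by linarith
  moreover have "fst r \<le> c" if "fst r - snd r = M"
  proof -
    have "u * (fst p - snd p) = u * M" "v * (fst q - snd q) = v * M"
      using that weighted(1)[OF uv(1) p] weighted(1)[OF uv(2) q] split[of M] diff_r by linarith+
    then show ?thesis
      using weighted(2)[OF uv(1) p] weighted(2)[OF uv(2) q] split[of c] fst_r by linarith
  qed
  ultimately have "r \<in> lex_below M c"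
    unfolding lex_below_def by auto
  then show "u *\<^sub>R p + v *\<^sub>R q \<in> lex_below M c"
    unfolding r_def .
qed

lemma maxmin_defect_at_lex_max:
  fixes W V :: "'a \<Rightarrow> real"
  assumes P: "finite P" "z \<in> P"
    and lex_max: "\<And>x. x \<in> P \<Longrightarrow> (W x, V x) \<in> lex_below (W z - V z) (W z)"
  shows "maxmin_defect P V z \<le> maxmin_defect P W z"
    and "maxmin_defect P W z \<le> maxmin_defect P V z \<Longrightarrow> 0 \<le> maxmin_defect P W z"
proof -
  have lex: "W x - V x < W z - V z \<or> (W x - V x = W z - V z \<and> W x \<le> W z)" if "x \<in> P" for x
    using lex_max[OF that] unfolding lex_below_def by simp
  have touch: "W x - W z \<le> V x - V z" if "x \<in> P" for x
    using lex[OF that] by linarith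
  note incr = max_min_increments_le[where W = W and V = V, OF P touch]
  show "maxmin_defect P V z \<le> maxmin_defect P W z"
    using incr unfolding maxmin_defect_def by linarith
  assume "maxmin_defect P W z \<le> maxmin_defect P V z"
  then have max_eq: "Max (W ` P) - W z = Max (V ` P) - V z"
    using incr unfolding maxmin_defect_def by linarith
  show "0 \<le> maxmin_defect P W z"
  proof (rule ccontr)
    assume "\<not> 0 \<le> maxmin_defect P W z"
    moreover have "Min (W ` P) \<le> W z"
      using P by simp
    ultimately have W_up: "W z < Max (W ` P)"
      unfolding maxmin_defect_def by linarith
    have "P \<noteq> {}"
      using P(2) by blast
    then have "Max (W ` P) \<in> W ` P"
      using P(1) by simp
    then obtain x where x: "x \<in> P" "W x = Max (W ` P)"
      by auto
    have "V x \<le> Max (V ` P)"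
      using P(1) x(1) by simp
    then have "W z - V z \<le> W x - V x"
      using max_eq x(2) by linarith
    then show False
      using lex[OF x(1)] W_up x(2) by linarith
  qed
qed

lemma discrete_max_principle_subsolution:
  fixes W V :: "'a \<Rightarrow> real"
  assumes N: "finite N" "N \<noteq> {}" "NI \<subseteq> N"
    and stencil: "\<And>z. z \<in> NI \<Longrightarrow> finite (P z) \<and> z \<in> P z"
    and hull: "\<And>z x. z \<in> NI \<Longrightarrow> x \<in> P z \<Longrightarrow> (W x, V x) \<in> convex hull ((\<lambda>y. (W y, V y)) ` N)"
    and sub: "\<And>z. z \<in> NI \<Longrightarrow> maxmin_defect (P z) W z \<le> maxmin_defect (P z) V z"
    and strict: "\<And>z. z \<in> NI \<Longrightarrow>
      maxmin_defect (P z) W z < maxmin_defect (P z) V z \<or> maxmin_defect (P z) W z < 0"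
  shows "\<exists>y \<in> N - NI. \<forall>x \<in> N. W x - V x \<le> W y - V y"
proof -
  obtain z where z: "z \<in> N"
    and lex: "\<And>y. y \<in> N \<Longrightarrow> W y - V y < W z - V z \<or> (W y - V y = W z - V z \<and> W y \<le> W z)"
    using finite_lex_argmax[OF N(1,2), of "\<lambda>y. W y - V y" W] by blast
  have "z \<notin> NI"
  proof
    assume zNI: "z \<in> NI"
    have "convex hull ((\<lambda>y. (W y, V y)) ` N) \<subseteq> lex_below (W z - V z) (W z)"
      by (rule hull_minimal[where S = convex, OF _ convex_lex_below]) (auto simp: lex_below_def dest: lex)
    then have "(W x, V x) \<in> lex_below (W z - V z) (W z)" if "x \<in> P z" for x
      using hull[OF zNI that] by blast
    with stencil[OF zNI] have "maxmin_defect (P z) V z \<le> maxmin_defect (P z) W z"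
      and "maxmin_defect (P z) W z \<le> maxmin_defect (P z) V z \<Longrightarrow> 0 \<le> maxmin_defect (P z) W z"
      using maxmin_defect_at_lex_max[of "P z" z W V] by blast+
    then show False
      using sub[OF zNI] strict[OF zNI] by linarith
  qed
  then show ?thesis
    using z lex by force
qed

lemma discrete_max_principle:
  fixes W V :: "'a \<Rightarrow> real"
  assumes N: "finite N" "N \<noteq> {}" "NI \<subseteq> N"
    and stencil: "\<And>z. z \<in> NI \<Longrightarrow> finite (P z) \<and> z \<in> P z"
    and hull: "\<And>z x. z \<in> NI \<Longrightarrow> x \<in> P z \<Longrightarrow> (W x, V x) \<in> convex hull ((\<lambda>y. (W y, V y)) ` N)"
    and sub: "\<And>z. z \<in> NI \<Longrightarrow> maxmin_defect (P z) W z \<le> maxmin_defect (P z) V z"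
    and strict: "(\<forall>z\<in>NI. maxmin_defect (P z) W z < maxmin_defect (P z) V z \<or> maxmin_defect (P z) W z < 0)
      \<or> (\<forall>z\<in>NI. maxmin_defect (P z) W z < maxmin_defect (P z) V z \<or> maxmin_defect (P z) V z > 0)"
  shows "\<exists>y \<in> N - NI. \<forall>x \<in> N. W x - V x \<le> W y - V y"
  using strict
proof
  assume "\<forall>z\<in>NI. maxmin_defect (P z) W z < maxmin_defect (P z) V z \<or> maxmin_defect (P z) W z < 0"
  then show ?thesis
    using discrete_max_principle_subsolution[of N NI P W V] N stencil hull sub by blast
next
  assume strict_V: "\<forall>z\<in>NI. maxmin_defect (P z) W z < maxmin_defect (P z) V z \<or> maxmin_defect (P z) V z > 0"
  define swap :: "real \<times> real \<Rightarrow> real \<times> real" where "swap p = (- snd p, - fst p)" for p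
  have "linear swap"
    unfolding swap_def by (auto intro!: linearI)
  then have "swap ` (convex hull ((\<lambda>y. (W y, V y)) ` N)) = convex hull (swap ` (\<lambda>y. (W y, V y)) ` N)"
    by (rule convex_hull_linear_image)
  also have "swap ` (\<lambda>y. (W y, V y)) ` N = (\<lambda>y. (- V y, - W y)) ` N"
    by (simp add: image_image swap_def)
  finally have hull_swap:
    "swap ` (convex hull ((\<lambda>y. (W y, V y)) ` N)) = convex hull ((\<lambda>y. (- V y, - W y)) ` N)" .
  then have hull_neg: "(- V x, - W x) \<in> convex hull ((\<lambda>y. (- V y, - W y)) ` N)" if "z \<in> NI" "x \<in> P z" for z x
    using hull[OF that] unfolding hull_swap[symmetric] swap_def by force
  have neg: "maxmin_defect (P z) (\<lambda>x. - U x) z = - maxmin_defect (P z) U z" if "z \<in> NI" for z U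
    using stencil[OF that] by (intro maxmin_defect_uminus) auto
  have "\<exists>y \<in> N - NI. \<forall>x \<in> N. - V x - - W x \<le> - V y - - W y"
    by (rule discrete_max_principle_subsolution[OF N stencil hull_neg]) (use sub strict_V neg in auto)
  then show ?thesis
    by auto
qed

section \<open>Piecewise linear interpolation on a conforming mesh\<close>

lemma affine_independent_weighted_sum_eq:
  fixes S :: "'a::real_vector set"
  assumes S: "finite S" "\<not> affine_dependent S" and C: "C \<subseteq> S"
    and l: "sum l S = 1" and m: "sum m C = 1"
    and same_point: "(\<Sum>v\<in>S. l v *\<^sub>R v) = (\<Sum>v\<in>C. m v *\<^sub>R v)"
  shows "(\<Sum>v\<in>S. l v * f v) = (\<Sum>v\<in>C. m v * f v)"
proof -
  define m' where "m' v = (if v \<in> C then m v else 0)" for v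
  have extend: "(\<Sum>v\<in>S. m' v *\<^sub>R g v) = (\<Sum>v\<in>C. m v *\<^sub>R g v)" for g :: "'a \<Rightarrow> 'b::real_vector"
  proof -
    have "(\<Sum>v\<in>S. m' v *\<^sub>R g v) = (\<Sum>v\<in>C. m' v *\<^sub>R g v)"
      using S(1) C by (intro sum.mono_neutral_right) (auto simp: m'_def)
    also have "\<dots> = (\<Sum>v\<in>C. m v *\<^sub>R g v)"
      by (intro sum.cong) (auto simp: m'_def)
    finally show ?thesis .
  qed
  have "l v = m' v" if "v \<in> S" for v
  proof (rule ccontr)
    assume "l v \<noteq> m' v"
    moreover have "(\<Sum>x\<in>S. l x - m' x) = 0"
      using l m extend[of "\<lambda>_. 1 :: real"] by (simp add: sum_subtractf)
    moreover have "(\<Sum>x\<in>S. (l x - m' x) *\<^sub>R x) = 0"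
      using same_point extend[of "\<lambda>x. x"] by (simp add: scaleR_diff_left sum_subtractf)
    ultimately have "affine_dependent S"
      unfolding affine_dependent_explicit_finite[OF S(1)] using that by (intro exI[of _ "\<lambda>x. l x - m' x"]) auto
    then show False
      using S(2) by contradiction
  qed
  then have "(\<Sum>v\<in>S. l v * f v) = (\<Sum>v\<in>S. m' v * f v)"
    by (intro sum.cong) auto
  also have "\<dots> = (\<Sum>v\<in>C. m v * f v)"
    using extend[of f] by simp
  finally show ?thesis .
qed

lemma lagrange_interp_eq:
  assumes mesh: "mesh T" and S: "S \<in> T"
    and l: "\<forall>v\<in>S. 0 \<le> l v" "sum l S = 1" "(\<Sum>v\<in>S. l v *\<^sub>R v) = x"
  shows "lagrange_interp T w x = (\<Sum>v\<in>S. l v * w v)"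
  unfolding lagrange_interp_def
proof (rule the_equality)
  show "\<exists>S'\<in>T. \<exists>l'. (\<forall>v\<in>S'. 0 \<le> l' v) \<and> sum l' S' = 1 \<and> (\<Sum>v\<in>S'. l' v *\<^sub>R v) = x
                      \<and> (\<Sum>v\<in>S. l v * w v) = (\<Sum>v\<in>S'. l' v * w v)"
    using S l by blast
next
  fix y assume "\<exists>S'\<in>T. \<exists>l'. (\<forall>v\<in>S'. 0 \<le> l' v) \<and> sum l' S' = 1 \<and> (\<Sum>v\<in>S'. l' v *\<^sub>R v) = x
                      \<and> y = (\<Sum>v\<in>S'. l' v * w v)"
  then obtain S' l' where S': "S' \<in> T" and l': "\<forall>v\<in>S'. 0 \<le> l' v" "sum l' S' = 1"
    "(\<Sum>v\<in>S'. l' v *\<^sub>R v) = x" and y: "y = (\<Sum>v\<in>S'. l' v * w v)"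
    by blast
  have simplex: "finite R" "\<not> affine_dependent R" if "R \<in> T" for R
    using mesh that unfolding mesh_def by auto
  have "x \<in> convex hull S" "x \<in> convex hull S'"
    using S l S' l' simplex unfolding convex_hull_finite[OF simplex(1)[OF S]] convex_hull_finite[OF simplex(1)[OF S']]
    by blast+
  moreover have "convex hull S \<inter> convex hull S' = convex hull (S \<inter> S')"
    using mesh S S' unfolding mesh_def by blast
  moreover have finite_face: "finite (S \<inter> S')"
    using simplex[OF S] by simp
  ultimately obtain m where m: "sum m (S \<inter> S') = 1" "(\<Sum>v\<in>S \<inter> S'. m v *\<^sub>R v) = x"
    unfolding convex_hull_finite[OF finite_face] by blast
  have "(\<Sum>v\<in>S. l v * w v) = (\<Sum>v\<in>S \<inter> S'. m v * w v)"
    using l m by (intro affine_independent_weighted_sum_eq simplex[OF S]) auto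
  moreover have "(\<Sum>v\<in>S'. l' v * w v) = (\<Sum>v\<in>S \<inter> S'. m v * w v)"
    using l' m by (intro affine_independent_weighted_sum_eq simplex[OF S']) auto
  ultimately show "y = (\<Sum>v\<in>S. l v * w v)"
    using y by simp
qed

lemma lagrange_interp_node:
  assumes "mesh T" "x \<in> mesh_nodes T"
  shows "lagrange_interp T w x = w x"
proof -
  obtain S where S: "S \<in> T" "x \<in> S"
    using assms(2) unfolding mesh_nodes_def by blast
  have "finite S"
    using assms(1) S(1) unfolding mesh_def by blast
  have delta: "(if v = x then 1 else 0) *\<^sub>R v = (if v = x then v else 0)"
    "(if v = x then 1 else 0) * w v = (if v = x then w v else 0)" for v
    by simp_all
  have "lagrange_interp T w x = (\<Sum>v\<in>S. (if v = x then 1 else 0) * w v)"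
    using S \<open>finite S\<close> by (intro lagrange_interp_eq[OF assms(1)]) (simp_all add: delta)
  also have "\<dots> = w x"
    using \<open>finite S\<close> S(2) by (simp add: delta)
  finally show ?thesis .
qed

lemma lagrange_interp_pair_in_convex_hull:
  assumes mesh: "mesh T" and x: "x \<in> mesh_union T"
  shows "(lagrange_interp T w x, lagrange_interp T v x)
    \<in> convex hull ((\<lambda>y. (lagrange_interp T w y, lagrange_interp T v y)) ` mesh_nodes T)"
proof -
  obtain S where S: "S \<in> T" "x \<in> convex hull S"
    using x unfolding mesh_union_def by blast
  have S_fin: "finite S" and S_nodes: "S \<subseteq> mesh_nodes T"
    using mesh S(1) unfolding mesh_def mesh_nodes_def by auto
  obtain l where l: "\<forall>y\<in>S. 0 \<le> l y" "sum l S = 1" "(\<Sum>y\<in>S. l y *\<^sub>R y) = x"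
    using S(2) unfolding convex_hull_finite[OF S_fin] by blast
  have "(lagrange_interp T w x, lagrange_interp T v x) = (\<Sum>y\<in>S. l y *\<^sub>R (w y, v y))"
    using lagrange_interp_eq[OF mesh S(1) l] by (simp add: prod_eq_iff fst_sum snd_sum)
  also have "\<dots> = (\<Sum>y\<in>S. l y *\<^sub>R (lagrange_interp T w y, lagrange_interp T v y))"
    using S_nodes by (intro sum.cong) (auto simp: lagrange_interp_node[OF mesh])
  also have "\<dots> \<in> convex hull ((\<lambda>y. (lagrange_interp T w y, lagrange_interp T v y)) ` mesh_nodes T)"
    using S_fin l S_nodes by (intro convex_sum convex_convex_hull) (auto intro: hull_inc)
  finally show ?thesis .
qed

lemma mesh_nodes_finite_nonempty:
  assumes "mesh T"
  shows "finite (mesh_nodes T)" "mesh_nodes T \<noteq> {}"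
proof -
  obtain S where S: "S \<in> T" "card S = DIM('a) + 1"
    using assms unfolding mesh_def by blast
  then have "S \<noteq> {}"
    by auto
  then show "mesh_nodes T \<noteq> {}"
    using S(1) unfolding mesh_nodes_def by blast
  show "finite (mesh_nodes T)"
    using assms unfolding mesh_def mesh_nodes_def by auto
qed

lemma mesh_size_pos:
  assumes "mesh T"
  shows "0 < mesh_size T"
proof -
  obtain S where S: "S \<in> T" "finite S" "card S = DIM('a) + 1"
    using assms unfolding mesh_def by blast
  then obtain a b where ab: "a \<in> S" "b \<in> S" "a \<noteq> b"
    using card_le_Suc0_iff_eq[OF S(2)] by fastforce
  have "0 < dist a b"
    using ab(3) by simp
  also have "\<dots> \<le> diameter (convex hull S)"
    using ab S(2) by (intro diameter_bounded_bound finite_imp_bounded_convex_hull) (auto intro: hull_inc)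
  also have "\<dots> \<le> mesh_size T"
    using assms S(1) unfolding mesh_size_def mesh_def by (intro Max_ge) auto
  finally show ?thesis .
qed

lemma inner_set_shift:
  assumes z: "z \<in> inner_set \<Omega> (r + s)" and x: "dist z x \<le> r" and s: "0 \<le> s"
  shows "x \<in> inner_set \<Omega> s"
proof -
  have z\<Omega>: "z \<in> \<Omega>" and far: "r + s < infdist z (frontier \<Omega>)"
    using z unfolding inner_set_def by auto
  have "x \<in> \<Omega>"
  proof (rule ccontr)
    assume "x \<notin> \<Omega>"
    then have "closed_segment z x \<inter> frontier \<Omega> \<noteq> {}"
      using z\<Omega> by (intro connected_Int_frontier) auto
    then obtain p where p: "p \<in> closed_segment z x" "p \<in> frontier \<Omega>"
      by blast
    have "infdist z (frontier \<Omega>) \<le> dist z p"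
      using infdist_le[OF p(2)] .
    also have "\<dots> \<le> dist z x"
      using dist_in_closed_segment[OF p(1)] by (simp add: dist_commute)
    finally show False
      using far x s by linarith
  qed
  moreover have "infdist z (frontier \<Omega>) \<le> infdist x (frontier \<Omega>) + dist z x"
    by (rule infdist_triangle)
  ultimately show ?thesis
    using far x unfolding inner_set_def by auto
qed

lemma stencil_subset_cball:
  assumes dirs: "S \<subseteq> cball 0 1" and "0 \<le> e"
  shows "stencil e S z \<subseteq> cball z e"
proof
  fix x assume "x \<in> stencil e S z"
  then consider "x = z" | u where "u \<in> S" "x = z + e *\<^sub>R u"
    unfolding stencil_def by blast
  then show "x \<in> cball z e"
  proof cases
    case 1
    then show ?thesis
      using assms(2) by simp
  next
    case 2
    then have "norm u \<le> 1"
      using dirs by auto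
    moreover have "dist z x = e * norm u"
      using 2(2) assms(2) by (simp add: dist_norm)
    ultimately show ?thesis
      using mult_left_le[OF _ assms(2)] by simp
  qed
qed

lemma stencil_subset_mesh_union:
  assumes dirs: "S \<subseteq> cball 0 1" and inner: "inner_set \<Omega> h \<subseteq> mesh_domain T"
    and h: "h \<le> e" and e: "0 \<le> e" and z: "z \<in> interior_nodes \<Omega> T e"
  shows "stencil e S z \<subseteq> mesh_union T"
proof
  fix x assume "x \<in> stencil e S z"
  then have "x \<in> cball z e"
    by (rule subsetD[OF stencil_subset_cball[OF dirs e]])
  then have close: "dist z x \<le> e"
    by simp
  have "z \<in> inner_set \<Omega> (e + e)"
    using z unfolding interior_nodes_def mult_2 by blast
  then have "x \<in> inner_set \<Omega> e"
    using close e by (rule inner_set_shift)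
  then have "x \<in> inner_set \<Omega> h"
    using h unfolding inner_set_def by auto
  then show "x \<in> mesh_union T"
    using inner interior_subset unfolding mesh_domain_def by blast
qed

lemma neg_inf_lap_eq:
  "neg_inf_lap T \<epsilon> S w z = maxmin_defect (stencil \<epsilon> S z) (lagrange_interp T w) z / \<epsilon>\<^sup>2"
  unfolding neg_inf_lap_def S_plus_def S_minus_def maxmin_defect_def
  by (cases "\<epsilon> = 0") (simp_all add: field_simps power2_eq_square)

theorem theorem3p2:
  fixes \<Omega> :: "'a::euclidean_space set" and T :: "'a set set"
    and h \<epsilon> \<theta> :: real and S\<theta> :: "'a set" and w v :: "'a \<Rightarrow> real"
  assumes dom: "domain_cb \<Omega>"
    and mesh: "mesh T"
    and h: "h = mesh_size T"
    and inner: "inner_set \<Omega> h \<subseteq> mesh_domain T" "mesh_domain T \<subseteq> \<Omega>"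
    and eps: "h \<le> \<epsilon>" "\<epsilon> \<le> diameter \<Omega>"
    and theta: "0 < \<theta>" "\<theta> \<le> 1"
    and dirs: "direction_set \<theta> S\<theta>"
    and wV: "w \<in> Vh T" and vV: "v \<in> Vh T"
    and star: "\<forall>z\<in>interior_nodes \<Omega> T \<epsilon>. neg_inf_lap T \<epsilon> S\<theta> w z \<le> neg_inf_lap T \<epsilon> S\<theta> v z"
    and cases: "(\<forall>z\<in>interior_nodes \<Omega> T \<epsilon>.
                   neg_inf_lap T \<epsilon> S\<theta> w z < neg_inf_lap T \<epsilon> S\<theta> v z \<or> neg_inf_lap T \<epsilon> S\<theta> w z < 0)
              \<or> (\<forall>z\<in>interior_nodes \<Omega> T \<epsilon>.
                   neg_inf_lap T \<epsilon> S\<theta> w z < neg_inf_lap T \<epsilon> S\<theta> v z \<or> neg_inf_lap T \<epsilon> S\<theta> v z > 0)"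
  shows "Max ((\<lambda>z. w z - v z) ` mesh_nodes T) = Max ((\<lambda>z. w z - v z) ` boundary_nodes \<Omega> T \<epsilon>)"
proof -
  define N where "N = mesh_nodes T"
  define NI where "NI = interior_nodes \<Omega> T \<epsilon>"
  define P where "P = stencil \<epsilon> S\<theta>"
  define W where "W = lagrange_interp T w"
  define V where "V = lagrange_interp T v"
  have e_pos: "0 < \<epsilon>"
    using mesh_size_pos[OF mesh] h eps(1) by linarith
  have dirs_finite: "finite S\<theta>" and dirs_ball: "S\<theta> \<subseteq> cball 0 1"
    using dirs unfolding direction_set_def by auto
  have nodes: "finite N" "N \<noteq> {}" "NI \<subseteq> N"
    using mesh_nodes_finite_nonempty[OF mesh] unfolding N_def NI_def interior_nodes_def by auto
  have stencils: "\<And>z. z \<in> NI \<Longrightarrow> finite (P z) \<and> z \<in> P z"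
    using dirs_finite unfolding P_def stencil_def by simp
  have hull: "\<And>z x. z \<in> NI \<Longrightarrow> x \<in> P z \<Longrightarrow> (W x, V x) \<in> convex hull ((\<lambda>y. (W y, V y)) ` N)"
    using stencil_subset_mesh_union[OF dirs_ball inner(1) eps(1) less_imp_le[OF e_pos]]
      lagrange_interp_pair_in_convex_hull[OF mesh]
    unfolding N_def NI_def P_def W_def V_def by blast
  have defect: "neg_inf_lap T \<epsilon> S\<theta> u z = maxmin_defect (P z) (lagrange_interp T u) z / \<epsilon>\<^sup>2" for u z
    unfolding P_def by (rule neg_inf_lap_eq)
  have "0 < \<epsilon>\<^sup>2"
    using e_pos by simp
  then have "\<exists>y \<in> N - NI. \<forall>x \<in> N. W x - V x \<le> W y - V y"
    using star cases
    by (intro discrete_max_principle[OF nodes stencils hull])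
      (auto simp: defect divide_le_cancel divide_less_cancel divide_less_0_iff zero_less_divide_iff NI_def W_def V_def)
  then obtain y where "y \<in> boundary_nodes \<Omega> T \<epsilon>" "\<And>x. x \<in> mesh_nodes T \<Longrightarrow> w x - v x \<le> w y - v y"
    using lagrange_interp_node[OF mesh] unfolding boundary_nodes_def N_def NI_def W_def V_def by auto
  then show ?thesis
    using mesh_nodes_finite_nonempty(1)[OF mesh] unfolding boundary_nodes_def
    by (intro Max_image_subset_eq) auto
qed

end
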